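(* Let $(G,O)$ be an equipped group with $O$ finite. Let $g_1,\dots,g_n\in O$, $a_1,b_1,\dots,a_k,b_k\in G$, $g\in O$, let $h\in\langle g_1,\dots,g_n,a_1,b_1,\dots,a_k,b_k\rangle$, and let $s_{g^{-1}}\in S(G,O)$ satisfy $\alpha(s_{g^{-1}})=g^{-1}$. Then there exists $z\in S(G,O)$ such that, in $\mathbb S(G,O)$, $$x_{g_1}\cdots x_{g_n}\,x_g\,s_{g^{-1}}\,y_{a_1,b_1}\cdots y_{a_k,b_k}=x_{g_1}\cdots x_{g_n}\,x_{g^h}\,z\,y_{a_1,b_1}\cdots y_{a_k,b_k}.$$
   Context: Conventions: $x^y=y^{-1}xy$, $[x,y]=xyx^{-1}y^{-1}$. An equipped group $(G,O)$: $O\subset G$ invariant under conjugation, ${\bf 1}\notin O$. The strong covering semigroup $\mathbb S(G,O)$ is the semigroup generated by $x_g$ ($g\in O$) and $y_{a,b}$ ($a,b\in G$) subject to the relations, for all $g_1,g_2,g\in O$, $a,b\in G$: $x_{g_1}x_{g_2}=x_{g_2}x_{g_1^{g_2}}$; $x_gy_{a,b}=y_{a,b}x_{g^{[a,b]}}$; $x_gy_{a,b}=x_{g^{c_1}}y_{ga,b}$ with $c_1=ab^{-1}a^{-1}g^{-1}$; $y_{a,b}x_g=y_{a,g^{-1}b}x_{g^{c_2}}$ with $c_2=ba^{-1}b^{-1}g$; $x_gy_{a,b}=x_{g^{[a,b]}}y_{a^{g^{[a,b]}},b^{g^{[a,b]}}}$. (In the paper it is defined via the algebraic braid groups and shown to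 have this presentation.) $S(G,O)$ denotes its subsemigroup generated by the $x_g$, $g\in O$ (the factorization semigroup, with relations $x_{g_1}x_{g_2}=x_{g_2}x_{g_1^{g_2}}$), and $\alpha:S(G,O)\to G$ is the homomorphism $x_g\mapsto g$. *)

theory Defs
  imports "HOL-Algebra.Algebra"
begin

definition gconj :: "('a, 'b) monoid_scheme \<Rightarrow> 'a \<Rightarrow> 'a \<Rightarrow> 'a" where
  "gconj G x y = inv\<^bsub>G\<^esub> y \<otimes>\<^bsub>G\<^esub> x \<otimes>\<^bsub>G\<^esub> y"

definition gcomm :: "('a, 'b) monoid_scheme \<Rightarrow> 'a \<Rightarrow> 'a \<Rightarrow> 'a" where
  "gcomm G x y = x \<otimes>\<^bsub>G\<^esub> y \<otimes>\<^bsub>G\<^esub> inv\<^bsub>G\<^esub> x \<otimes>\<^bsub>G\<^esub> inv\<^bsub>G\<^esub> y"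

definition equipped :: "('a, 'b) monoid_scheme \<Rightarrow> 'a set \<Rightarrow> bool" where
  "equipped G Oc \<longleftrightarrow> group G \<and> Oc \<subseteq> carrier G \<and>
     (\<forall>g\<in>Oc. \<forall>h\<in>carrier G. gconj G g h \<in> Oc) \<and> \<one>\<^bsub>G\<^esub> \<notin> Oc"

text \<open>Generators of the strong covering semigroup: Xg g = x_g, Yab a b = y_{a,b}.
  Elements of the semigroup are represented by nonempty words.\<close>
datatype 'a gen = Xg 'a | Yab 'a 'a

definition cc1 :: "('a, 'b) monoid_scheme \<Rightarrow> 'a \<Rightarrow> 'a \<Rightarrow> 'a \<Rightarrow> 'a" where
  "cc1 G g a b = a \<otimes>\<^bsub>G\<^esub> inv\<^bsub>G\<^esub> b \<otimes>\<^bsub>G\<^esub> inv\<^bsub>G\<^esub> a \<otimes>\<^bsub>G\<^esub> inv\<^bsub>G\<^esub> g"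

definition cc2 :: "('a, 'b) monoid_scheme \<Rightarrow> 'a \<Rightarrow> 'a \<Rightarrow> 'a \<Rightarrow> 'a" where
  "cc2 G g a b = b \<otimes>\<^bsub>G\<^esub> inv\<^bsub>G\<^esub> a \<otimes>\<^bsub>G\<^esub> inv\<^bsub>G\<^esub> b \<otimes>\<^bsub>G\<^esub> g"

inductive strong_rel :: "('a, 'b) monoid_scheme \<Rightarrow> 'a set \<Rightarrow> 'a gen list \<Rightarrow> 'a gen list \<Rightarrow> bool"
  for G Oc where
  r1: "g1 \<in> Oc \<Longrightarrow> g2 \<in> Oc \<Longrightarrow>
       strong_rel G Oc [Xg g1, Xg g2] [Xg g2, Xg (gconj G g1 g2)]"
| r2: "g \<in> Oc \<Longrightarrow> a \<in> carrier G \<Longrightarrow> b \<in> carrier G \<Longrightarrow>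
       strong_rel G Oc [Xg g, Yab a b] [Yab a b, Xg (gconj G g (gcomm G a b))]"
| r3: "g \<in> Oc \<Longrightarrow> a \<in> carrier G \<Longrightarrow> b \<in> carrier G \<Longrightarrow>
       strong_rel G Oc [Xg g, Yab a b]
         [Xg (gconj G g (cc1 G g a b)), Yab (g \<otimes>\<^bsub>G\<^esub> a) b]"
| r4: "g \<in> Oc \<Longrightarrow> a \<in> carrier G \<Longrightarrow> b \<in> carrier G \<Longrightarrow>
       strong_rel G Oc [Yab a b, Xg g]
         [Yab a (inv\<^bsub>G\<^esub> g \<otimes>\<^bsub>G\<^esub> b), Xg (gconj G g (cc2 G g a b))]"
| r5: "g \<in> Oc \<Longrightarrow> a \<in> carrier G \<Longrightarrow> b \<in> carrier G \<Longrightarrow>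
       strong_rel G Oc [Xg g, Yab a b]
         [Xg (gconj G g (gcomm G a b)),
          Yab (gconj G a (gconj G g (gcomm G a b))) (gconj G b (gconj G g (gcomm G a b)))]"

text \<open>Equality in the strong covering semigroup: the congruence on words
  generated by the defining relations.\<close>
inductive strong_eq :: "('a, 'b) monoid_scheme \<Rightarrow> 'a set \<Rightarrow> 'a gen list \<Rightarrow> 'a gen list \<Rightarrow> bool"
  for G Oc where
  base: "strong_rel G Oc u v \<Longrightarrow> strong_eq G Oc u v"
| refl: "strong_eq G Oc u u"
| sym: "strong_eq G Oc u v \<Longrightarrow> strong_eq G Oc v u"
| trans: "strong_eq G Oc u v \<Longrightarrow> strong_eq G Oc v w \<Longrightarrow> strong_eq G Oc u w"
| ctxt: "strong_eq G Oc u v \<Longrightarrow> strong_eq G Oc (p @ u @ q) (p @ v @ q)"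

text \<open>alpha : S(G,Oc) -> G on a word x_{h_1}...x_{h_m}, given by the list [h_1,...,h_m].\<close>
definition alpha :: "('a, 'b) monoid_scheme \<Rightarrow> 'a list \<Rightarrow> 'a" where
  "alpha G hs = foldr (\<lambda>h acc. h \<otimes>\<^bsub>G\<^esub> acc) hs \<one>\<^bsub>G\<^esub>"

definition ywords :: "('a \<times> 'a) list \<Rightarrow> 'a gen list" where
  "ywords abps = map (\<lambda>(a, b). Yab a b) abps"

end

theory Submission
  imports Defs
begin

text \<open>Call a word x_{w_1} ... x_{w_m} with all w_i in O neutral if w_1 ... w_m = 1. A neutral word
  commutes with every generator of the strong covering semigroup, and it can be conjugated in
  place: by k when it stands next to x_k, and by a^{-1} or b^{-1} when it stands next to y_{a,b}.
  Since x_g s_{g^{-1}} is neutral and is surrounded by the x_{g_i} and y_{a_i,b_i}, the set of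
  heads f of neutral words x_f z that can replace it is stable under conjugation by the g_i, a_i^{-1}
  and b_i^{-1}. Conjugation is injective and O is finite, so this set is also stable under the
  inverses of these elements, hence under the whole subgroup they generate; in particular it
  contains g^h. The tail z is nonempty because g^h \<noteq> 1.\<close>

lemmas strong_eq_trans [trans] = strong_eq.trans

lemma strong_eq_append_left: "strong_eq G Oc u v \<Longrightarrow> strong_eq G Oc (p @ u) (p @ v)"
  using strong_eq.ctxt[of G Oc u v p "[]"] by simp

lemma strong_eq_append_right: "strong_eq G Oc u v \<Longrightarrow> strong_eq G Oc (u @ q) (v @ q)"
  using strong_eq.ctxt[of G Oc u v "[]" q] by simp

lemma strong_eq_Cons: "strong_eq G Oc u v \<Longrightarrow> strong_eq G Oc (x # u) (x # v)"
  using strong_eq_append_left[of G Oc u v "[x]"] by simp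

lemma strong_eq_two_letters:
  "strong_eq G Oc [x, y] [x', y'] \<Longrightarrow> strong_eq G Oc (x # y # q) (x' # y' # q)"
  using strong_eq_append_right[of G Oc "[x, y]" "[x', y']" q] by simp

lemma strong_rel_two_letters:
  "strong_rel G Oc [x, y] [x', y'] \<Longrightarrow> strong_eq G Oc (x # y # q) (x' # y' # q)"
  by (rule strong_eq_two_letters[OF strong_eq.base])

lemma alpha_Nil [simp]: "alpha G [] = \<one>\<^bsub>G\<^esub>"
  by (simp add: alpha_def)

lemma alpha_Cons [simp]: "alpha G (w # ws) = w \<otimes>\<^bsub>G\<^esub> alpha G ws"
  by (simp add: alpha_def)

lemma ywords_Nil [simp]: "ywords [] = []"
  by (simp add: ywords_def)

lemma ywords_Cons [simp]: "ywords ((a, b) # abps) = Yab a b # ywords abps"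
  by (simp add: ywords_def)

lemma ywords_append [simp]: "ywords (us @ vs) = ywords us @ ywords vs"
  by (simp add: ywords_def)

abbreviation conj_word :: "('a, 'b) monoid_scheme \<Rightarrow> 'a list \<Rightarrow> 'a \<Rightarrow> 'a list" where
  "conj_word G ws c \<equiv> map (\<lambda>w. gconj G w c) ws"

definition neutral_word :: "('a, 'b) monoid_scheme \<Rightarrow> 'a set \<Rightarrow> 'a list \<Rightarrow> bool" where
  "neutral_word G Oc ws \<longleftrightarrow> set ws \<subseteq> Oc \<and> alpha G ws = \<one>\<^bsub>G\<^esub>"

definition neutral_heads ::
    "('a, 'b) monoid_scheme \<Rightarrow> 'a set \<Rightarrow> 'a gen list \<Rightarrow> 'a gen list \<Rightarrow> 'a gen list \<Rightarrow> 'a set" where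
  "neutral_heads G Oc w P Y =
     {f. \<exists>zs. neutral_word G Oc (f # zs) \<and> strong_eq G Oc w (P @ map Xg (f # zs) @ Y)}"

lemma neutral_heads_subset: "neutral_heads G Oc w P Y \<subseteq> Oc"
  by (auto simp: neutral_heads_def neutral_word_def)

context group
begin

lemma gconj_closed [simp]: "x \<in> carrier G \<Longrightarrow> y \<in> carrier G \<Longrightarrow> gconj G x y \<in> carrier G"
  by (simp add: gconj_def)

lemma gcomm_closed [simp]: "x \<in> carrier G \<Longrightarrow> y \<in> carrier G \<Longrightarrow> gcomm G x y \<in> carrier G"
  by (simp add: gcomm_def)

lemma cc1_closed [simp]:
  "g \<in> carrier G \<Longrightarrow> x \<in> carrier G \<Longrightarrow> y \<in> carrier G \<Longrightarrow> cc1 G g x y \<in> carrier G"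
  by (simp add: cc1_def)

lemma gconj_one_right [simp]: "x \<in> carrier G \<Longrightarrow> gconj G x \<one> = x"
  by (simp add: gconj_def)

lemma gconj_one_left [simp]: "y \<in> carrier G \<Longrightarrow> gconj G \<one> y = \<one>"
  by (simp add: gconj_def)

lemma inv_mult_cancel_left: "x \<in> carrier G \<Longrightarrow> y \<in> carrier G \<Longrightarrow> inv x \<otimes> (x \<otimes> y) = y"
  by (simp add: m_assoc[symmetric])

lemma mult_inv_cancel_left: "x \<in> carrier G \<Longrightarrow> y \<in> carrier G \<Longrightarrow> x \<otimes> (inv x \<otimes> y) = y"
  by (simp add: m_assoc[symmetric])

lemmas group_normalize = m_assoc inv_mult_group inv_mult_cancel_left mult_inv_cancel_left

lemma gconj_gconj:
  "x \<in> carrier G \<Longrightarrow> y \<in> carrier G \<Longrightarrow> z \<in> carrier G \<Longrightarrow>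
   gconj G (gconj G x y) z = gconj G x (y \<otimes> z)"
  by (simp add: gconj_def group_normalize)

lemma gconj_gconj_inv [simp]:
  "x \<in> carrier G \<Longrightarrow> y \<in> carrier G \<Longrightarrow> gconj G (gconj G x y) (inv y) = x"
  by (simp add: gconj_gconj)

lemma gconj_inv_gconj [simp]:
  "x \<in> carrier G \<Longrightarrow> y \<in> carrier G \<Longrightarrow> gconj G (gconj G x (inv y)) y = x"
  by (simp add: gconj_gconj)

lemma gconj_mult:
  "x \<in> carrier G \<Longrightarrow> y \<in> carrier G \<Longrightarrow> z \<in> carrier G \<Longrightarrow>
   gconj G (x \<otimes> y) z = gconj G x z \<otimes> gconj G y z"
  by (simp add: gconj_def group_normalize)

lemma gconj_cc1_gcomm:
  "g \<in> carrier G \<Longrightarrow> a \<in> carrier G \<Longrightarrow> b \<in> carrier G \<Longrightarrow>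
   gconj G (gconj G g (cc1 G g a b)) (gcomm G (g \<otimes> a) b) = gconj G g (inv b)"
  by (simp add: gconj_def cc1_def gcomm_def group_normalize)

lemma gconj_gcomm_cc2:
  "g \<in> carrier G \<Longrightarrow> a \<in> carrier G \<Longrightarrow> b \<in> carrier G \<Longrightarrow>
   gconj G (gconj G g (inv a)) (gcomm G a (inv g \<otimes> b)) = gconj G g (cc2 G g a b)"
  by (simp add: gconj_def cc2_def gcomm_def group_normalize)

lemma alpha_closed [simp]: "set ws \<subseteq> carrier G \<Longrightarrow> alpha G ws \<in> carrier G"
  by (induction ws) auto

lemma alpha_conj_word:
  "set ws \<subseteq> carrier G \<Longrightarrow> c \<in> carrier G \<Longrightarrow> alpha G (conj_word G ws c) = gconj G (alpha G ws) c"
  by (induction ws) (auto simp: gconj_mult)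

lemma conj_image_inv:
  assumes "finite A" "A \<subseteq> carrier G" "k \<in> carrier G" "(\<lambda>f. gconj G f k) ` A \<subseteq> A"
  shows "(\<lambda>f. gconj G f (inv k)) ` A \<subseteq> A"
proof -
  have "inj_on (\<lambda>f. gconj G f k) A"
    using assms(2,3) by (intro inj_on_inverseI[where g = "\<lambda>f. gconj G f (inv k)"]) auto
  then have "(\<lambda>f. gconj G f k) ` A = A"
    using assms(1,4) by (rule endo_inj_surj[rotated 2])
  show ?thesis
  proof (rule image_subsetI)
    fix f
    assume "f \<in> A"
    then obtain f0 where "f0 \<in> A" "f = gconj G f0 k"
      using \<open>(\<lambda>f. gconj G f k) ` A = A\<close> by blast
    then show "gconj G f (inv k) \<in> A"
      using assms(2,3) by auto
  qed
qed

lemma conj_image_generate: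
  assumes "finite A" "A \<subseteq> carrier G" "S \<subseteq> carrier G"
    and "\<And>k. k \<in> S \<Longrightarrow> (\<lambda>f. gconj G f k) ` A \<subseteq> A"
    and "h \<in> generate G S"
  shows "(\<lambda>f. gconj G f h) ` A \<subseteq> A"
  using assms(5)
proof (induction rule: generate.induct)
  case one
  then show ?case using assms(2) by auto
next
  case (incl k)
  then show ?case by (rule assms(4))
next
  case (inv k)
  then show ?case using assms by (intro conj_image_inv) auto
next
  case (eng h1 h2)
  have "h1 \<in> carrier G" "h2 \<in> carrier G"
    using eng.hyps generate_incl[OF assms(3)] by auto
  then show ?case
    using eng.IH assms(2) by (force simp: gconj_gconj[symmetric])
qed

end

locale conj_invariant_set = group G for G :: "('a, 'b) monoid_scheme" (structure) +
  fixes Oc :: "'a set"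
  assumes Oc_subset: "Oc \<subseteq> carrier G"
    and gconj_in_Oc: "g \<in> Oc \<Longrightarrow> h \<in> carrier G \<Longrightarrow> gconj G g h \<in> Oc"

lemma equipped_imp_conj_invariant_set: "equipped G Oc \<Longrightarrow> conj_invariant_set G Oc"
  by (auto simp: equipped_def conj_invariant_set_def conj_invariant_set_axioms_def)

context conj_invariant_set
begin

lemma Oc_carrier [simp]: "g \<in> Oc \<Longrightarrow> g \<in> carrier G"
  using Oc_subset by auto

lemma set_Oc_carrier: "set ws \<subseteq> Oc \<Longrightarrow> set ws \<subseteq> carrier G"
  using Oc_subset by auto

lemma neutral_word_conj:
  "neutral_word G Oc ws \<Longrightarrow> c \<in> carrier G \<Longrightarrow> neutral_word G Oc (conj_word G ws c)"
  using gconj_in_Oc alpha_conj_word[OF set_Oc_carrier]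
  by (auto simp: neutral_word_def)

lemma x_pass_word:
  "e \<in> Oc \<Longrightarrow> set ws \<subseteq> Oc \<Longrightarrow>
   strong_eq G Oc (Xg e # map Xg ws) (map Xg ws @ [Xg (gconj G e (alpha G ws))])"
proof (induction ws arbitrary: e)
  case Nil
  then show ?case by (simp add: strong_eq.refl)
next
  case (Cons w ws)
  have "strong_eq G Oc (Xg e # Xg w # map Xg ws) (Xg w # Xg (gconj G e w) # map Xg ws)"
    using Cons.prems by (intro strong_rel_two_letters strong_rel.r1) auto
  also have "strong_eq G Oc \<dots> (Xg w # map Xg ws @ [Xg (gconj G (gconj G e w) (alpha G ws))])"
    using Cons by (intro strong_eq_Cons Cons.IH) (auto intro: gconj_in_Oc)
  finally show ?case
    using Cons.prems set_Oc_carrier by (simp add: gconj_gconj)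
qed

lemma word_pass_x:
  "e \<in> Oc \<Longrightarrow> set ws \<subseteq> Oc \<Longrightarrow>
   strong_eq G Oc (map Xg ws @ [Xg e]) (Xg e # map Xg (conj_word G ws e))"
proof (induction ws)
  case Nil
  then show ?case by (simp add: strong_eq.refl)
next
  case (Cons w ws)
  have "strong_eq G Oc (Xg w # map Xg ws @ [Xg e]) (Xg w # Xg e # map Xg (conj_word G ws e))"
    using Cons by (intro strong_eq_Cons Cons.IH) auto
  also have "strong_eq G Oc \<dots> (Xg e # Xg (gconj G w e) # map Xg (conj_word G ws e))"
    using Cons.prems by (intro strong_rel_two_letters strong_rel.r1) auto
  finally show ?case by simp
qed

lemma neutral_commute_x_word:
  "set us \<subseteq> Oc \<Longrightarrow> neutral_word G Oc ws \<Longrightarrow>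
   strong_eq G Oc (map Xg us @ map Xg ws) (map Xg ws @ map Xg us)"
proof (induction us)
  case Nil
  then show ?case by (simp add: strong_eq.refl)
next
  case (Cons u us)
  have "strong_eq G Oc (Xg u # map Xg us @ map Xg ws) (Xg u # map Xg ws @ map Xg us)"
    using Cons by (intro strong_eq_Cons Cons.IH) auto
  also have "strong_eq G Oc \<dots> (map Xg ws @ Xg u # map Xg us)"
    using strong_eq_append_right[OF x_pass_word[of u ws], of "map Xg us"] Cons.prems
    by (simp add: neutral_word_def)
  finally show ?case by simp
qed

lemma x_conj_neutral:
  assumes "k \<in> Oc" "neutral_word G Oc ws"
  shows "strong_eq G Oc (Xg k # map Xg ws) (Xg k # map Xg (conj_word G ws k))"
proof -
  have "strong_eq G Oc (Xg k # map Xg ws) (map Xg ws @ [Xg k])"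
    using x_pass_word[of k ws] assms by (simp add: neutral_word_def)
  also have "strong_eq G Oc \<dots> (Xg k # map Xg (conj_word G ws k))"
    using assms by (intro word_pass_x) (auto simp: neutral_word_def)
  finally show ?thesis .
qed

lemma prefix_conj_neutral:
  assumes "set gs \<subseteq> Oc" "k \<in> set gs" "neutral_word G Oc ws"
  shows "strong_eq G Oc (map Xg gs @ map Xg ws @ Y) (map Xg gs @ map Xg (conj_word G ws k) @ Y)"
proof -
  obtain us vs where gs: "gs = us @ k # vs"
    using assms(2) split_list by metis
  have k: "k \<in> Oc" and vs: "set vs \<subseteq> Oc"
    using assms(1) gs by auto
  have ws': "neutral_word G Oc (conj_word G ws k)"
    using assms(3) k by (simp add: neutral_word_conj)
  let ?P = "map Xg us @ [Xg k]"
  have "strong_eq G Oc (?P @ (map Xg vs @ map Xg ws) @ Y) (?P @ (map Xg ws @ map Xg vs) @ Y)"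
    using vs assms(3) by (intro strong_eq.ctxt neutral_commute_x_word)
  also have "?P @ (map Xg ws @ map Xg vs) @ Y = map Xg us @ (Xg k # map Xg ws) @ map Xg vs @ Y"
    by simp
  also have "strong_eq G Oc \<dots> (map Xg us @ (Xg k # map Xg (conj_word G ws k)) @ map Xg vs @ Y)"
    using k assms(3) by (intro strong_eq.ctxt x_conj_neutral)
  also have "\<dots> = ?P @ (map Xg (conj_word G ws k) @ map Xg vs) @ Y"
    by simp
  also have "strong_eq G Oc \<dots> (?P @ (map Xg vs @ map Xg (conj_word G ws k)) @ Y)"
    using vs ws' by (intro strong_eq.ctxt strong_eq.sym[OF neutral_commute_x_word])
  finally show ?thesis
    by (simp add: gs)
qed

text \<open>x_f y_{a,b} with f^{[a,b]} = e is rewritten both by r2 and by r5.\<close>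
lemma y_pass_x:
  assumes "e \<in> Oc" "a \<in> carrier G" "b \<in> carrier G"
  shows "strong_eq G Oc [Yab a b, Xg e] [Xg e, Yab (gconj G a e) (gconj G b e)]"
proof -
  define f where "f = gconj G e (inv (gcomm G a b))"
  have f: "f \<in> Oc" "gconj G f (gcomm G a b) = e"
    using assms by (simp_all add: f_def gconj_in_Oc)
  have "strong_eq G Oc [Yab a b, Xg e] [Xg f, Yab a b]"
    using strong_rel.r2[OF f(1) assms(2,3)] f(2) by (auto intro: strong_eq.sym strong_eq.base)
  also have "strong_eq G Oc \<dots> [Xg e, Yab (gconj G a e) (gconj G b e)]"
    using strong_rel.r5[OF f(1) assms(2,3)] f(2) by (auto intro: strong_eq.base)
  finally show ?thesis .
qed

lemma y_pass_word:
  "set ws \<subseteq> Oc \<Longrightarrow> a \<in> carrier G \<Longrightarrow> b \<in> carrier G \<Longrightarrow>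
   strong_eq G Oc (Yab a b # map Xg ws)
     (map Xg ws @ [Yab (gconj G a (alpha G ws)) (gconj G b (alpha G ws))])"
proof (induction ws arbitrary: a b)
  case Nil
  then show ?case by (simp add: strong_eq.refl)
next
  case (Cons w ws)
  have "strong_eq G Oc (Yab a b # Xg w # map Xg ws) (Xg w # Yab (gconj G a w) (gconj G b w) # map Xg ws)"
    using Cons.prems by (intro strong_eq_two_letters[OF y_pass_x]) auto
  also have "strong_eq G Oc \<dots> (Xg w # map Xg ws @
      [Yab (gconj G (gconj G a w) (alpha G ws)) (gconj G (gconj G b w) (alpha G ws))])"
    using Cons.prems by (intro strong_eq_Cons Cons.IH) auto
  finally show ?case
    using Cons.prems set_Oc_carrier by (simp add: gconj_gconj)
qed

lemma neutral_commute_ywords: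
  "neutral_word G Oc ws \<Longrightarrow> \<forall>(a, b) \<in> set abps. a \<in> carrier G \<and> b \<in> carrier G \<Longrightarrow>
   strong_eq G Oc (ywords abps @ map Xg ws) (map Xg ws @ ywords abps)"
proof (induction abps)
  case Nil
  then show ?case by (simp add: strong_eq.refl)
next
  case (Cons ab abps)
  obtain a b where ab: "ab = (a, b)"
    by fastforce
  have "strong_eq G Oc (Yab a b # ywords abps @ map Xg ws) (Yab a b # map Xg ws @ ywords abps)"
    using Cons by (intro strong_eq_Cons Cons.IH) auto
  also have "strong_eq G Oc \<dots> (map Xg ws @ Yab a b # ywords abps)"
    using strong_eq_append_right[OF y_pass_word[of ws a b], of "ywords abps"] Cons.prems ab
    by (simp add: neutral_word_def)
  finally show ?case
    by (simp add: ab)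
qed

lemma y_pass_x_fst:
  assumes "g \<in> Oc" "a \<in> carrier G" "b \<in> carrier G"
  shows "strong_eq G Oc [Yab a b, Xg g] [Xg (gconj G g (inv a)), Yab a (inv g \<otimes> b)]"
proof -
  have "strong_eq G Oc [Xg (gconj G g (inv a)), Yab a (inv g \<otimes> b)]
      [Yab a (inv g \<otimes> b), Xg (gconj G (gconj G g (inv a)) (gcomm G a (inv g \<otimes> b)))]"
    using assms by (intro strong_eq.base strong_rel.r2) (simp_all add: gconj_in_Oc)
  then have r2: "strong_eq G Oc [Yab a (inv g \<otimes> b), Xg (gconj G g (cc2 G g a b))]
      [Xg (gconj G g (inv a)), Yab a (inv g \<otimes> b)]"
    using assms by (simp add: gconj_gcomm_cc2 strong_eq.sym)
  have "strong_eq G Oc [Yab a b, Xg g] [Yab a (inv g \<otimes> b), Xg (gconj G g (cc2 G g a b))]"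
    using assms by (intro strong_eq.base strong_rel.r4)
  also note r2
  finally show ?thesis .
qed

lemma y_pass_word_fst:
  "set ws \<subseteq> Oc \<Longrightarrow> a \<in> carrier G \<Longrightarrow> b \<in> carrier G \<Longrightarrow>
   strong_eq G Oc (Yab a b # map Xg ws)
     (map Xg (conj_word G ws (inv a)) @ [Yab a (inv (alpha G ws) \<otimes> b)])"
proof (induction ws arbitrary: b)
  case Nil
  then show ?case by (simp add: strong_eq.refl)
next
  case (Cons w ws)
  have "strong_eq G Oc (Yab a b # Xg w # map Xg ws)
      (Xg (gconj G w (inv a)) # Yab a (inv w \<otimes> b) # map Xg ws)"
    using Cons.prems by (intro strong_eq_two_letters[OF y_pass_x_fst]) auto
  also have "strong_eq G Oc \<dots> (Xg (gconj G w (inv a)) #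
      map Xg (conj_word G ws (inv a)) @ [Yab a (inv (alpha G ws) \<otimes> (inv w \<otimes> b))])"
    using Cons.prems by (intro strong_eq_Cons Cons.IH) auto
  finally show ?case
    using Cons.prems set_Oc_carrier by (simp add: group_normalize)
qed

lemma x_pass_y_snd:
  assumes "g \<in> Oc" "a \<in> carrier G" "b \<in> carrier G"
  shows "strong_eq G Oc [Xg g, Yab a b] [Yab (g \<otimes> a) b, Xg (gconj G g (inv b))]"
proof -
  have "strong_eq G Oc [Xg g, Yab a b] [Xg (gconj G g (cc1 G g a b)), Yab (g \<otimes> a) b]"
    using assms by (intro strong_eq.base strong_rel.r3)
  also have "strong_eq G Oc \<dots>
      [Yab (g \<otimes> a) b, Xg (gconj G (gconj G g (cc1 G g a b)) (gcomm G (g \<otimes> a) b))]"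
    using assms by (intro strong_eq.base strong_rel.r2) (simp_all add: gconj_in_Oc)
  also have "\<dots> = [Yab (g \<otimes> a) b, Xg (gconj G g (inv b))]"
    using assms by (simp add: gconj_cc1_gcomm)
  finally show ?thesis .
qed

lemma word_pass_y_snd:
  "set ws \<subseteq> Oc \<Longrightarrow> a \<in> carrier G \<Longrightarrow> b \<in> carrier G \<Longrightarrow>
   strong_eq G Oc (map Xg ws @ [Yab a b])
     (Yab (alpha G ws \<otimes> a) b # map Xg (conj_word G ws (inv b)))"
proof (induction ws arbitrary: a)
  case Nil
  then show ?case by (simp add: strong_eq.refl)
next
  case (Cons w ws)
  have "strong_eq G Oc (Xg w # map Xg ws @ [Yab a b])
      (Xg w # Yab (alpha G ws \<otimes> a) b # map Xg (conj_word G ws (inv b)))"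
    using Cons.prems by (intro strong_eq_Cons Cons.IH) auto
  also have "strong_eq G Oc \<dots> (Yab (w \<otimes> (alpha G ws \<otimes> a)) b #
      Xg (gconj G w (inv b)) # map Xg (conj_word G ws (inv b)))"
    using Cons.prems set_Oc_carrier by (intro strong_eq_two_letters[OF x_pass_y_snd]) auto
  finally show ?case
    using Cons.prems set_Oc_carrier by (simp add: m_assoc)
qed

lemma neutral_conj_inv_fst:
  assumes "neutral_word G Oc ws" "a \<in> carrier G" "b \<in> carrier G"
  shows "strong_eq G Oc (map Xg ws @ [Yab a b]) (map Xg (conj_word G ws (inv a)) @ [Yab a b])"
proof -
  have ws: "set ws \<subseteq> Oc" "alpha G ws = \<one>"
    using assms(1) by (auto simp: neutral_word_def)
  have "strong_eq G Oc (map Xg ws @ [Yab a b]) (Yab a b # map Xg ws)"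
    using y_pass_word[OF ws(1) assms(2,3)] ws assms by (simp add: strong_eq.sym)
  also have "strong_eq G Oc \<dots> (map Xg (conj_word G ws (inv a)) @ [Yab a b])"
    using y_pass_word_fst[OF ws(1) assms(2,3)] ws assms by simp
  finally show ?thesis .
qed

lemma neutral_conj_inv_snd:
  assumes "neutral_word G Oc ws" "a \<in> carrier G" "b \<in> carrier G"
  shows "strong_eq G Oc (map Xg ws @ [Yab a b]) (map Xg (conj_word G ws (inv b)) @ [Yab a b])"
proof -
  have ws: "set ws \<subseteq> Oc" "alpha G ws = \<one>"
    using assms(1) by (auto simp: neutral_word_def)
  have ws': "set (conj_word G ws (inv b)) \<subseteq> Oc" "alpha G (conj_word G ws (inv b)) = \<one>"
    using neutral_word_conj[OF assms(1)] assms(3) by (auto simp: neutral_word_def)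
  have "strong_eq G Oc (map Xg ws @ [Yab a b]) (Yab a b # map Xg (conj_word G ws (inv b)))"
    using word_pass_y_snd[OF ws(1) assms(2,3)] ws assms by simp
  also have "strong_eq G Oc \<dots> (map Xg (conj_word G ws (inv b)) @ [Yab a b])"
    using y_pass_word[OF ws'(1) assms(2,3)] ws' assms by simp
  finally show ?thesis .
qed

lemma ywords_replace_neutral:
  assumes "\<forall>(a, b) \<in> set abps. a \<in> carrier G \<and> b \<in> carrier G" "(a, b) \<in> set abps"
    and "neutral_word G Oc ws" "neutral_word G Oc ws'"
    and "strong_eq G Oc (map Xg ws @ [Yab a b]) (map Xg ws' @ [Yab a b])"
  shows "strong_eq G Oc (P @ map Xg ws @ ywords abps) (P @ map Xg ws' @ ywords abps)"
proof -
  obtain us vs where abps: "abps = us @ (a, b) # vs"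
    using assms(2) split_list by metis
  have us: "\<forall>(a, b) \<in> set us. a \<in> carrier G \<and> b \<in> carrier G"
    using assms(1) abps by auto
  let ?Y = "Yab a b # ywords vs"
  have "strong_eq G Oc (P @ (map Xg ws @ ywords us) @ ?Y) (P @ (ywords us @ map Xg ws) @ ?Y)"
    using assms(3) us by (intro strong_eq.ctxt strong_eq.sym[OF neutral_commute_ywords])
  also have "\<dots> = (P @ ywords us) @ (map Xg ws @ [Yab a b]) @ ywords vs"
    by simp
  also have "strong_eq G Oc \<dots> ((P @ ywords us) @ (map Xg ws' @ [Yab a b]) @ ywords vs)"
    using assms(5) by (rule strong_eq.ctxt)
  also have "\<dots> = P @ (ywords us @ map Xg ws') @ ?Y"
    by simp
  also have "strong_eq G Oc \<dots> (P @ (map Xg ws' @ ywords us) @ ?Y)"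
    using assms(4) us by (intro strong_eq.ctxt neutral_commute_ywords)
  finally show ?thesis
    by (simp add: abps)
qed

lemma ywords_conj_neutral_fst:
  assumes "\<forall>(a, b) \<in> set abps. a \<in> carrier G \<and> b \<in> carrier G" "(a, b) \<in> set abps"
    and "neutral_word G Oc ws"
  shows "strong_eq G Oc (P @ map Xg ws @ ywords abps)
    (P @ map Xg (conj_word G ws (inv a)) @ ywords abps)"
proof -
  have ab: "a \<in> carrier G" "b \<in> carrier G"
    using assms(1,2) by auto
  show ?thesis
    by (rule ywords_replace_neutral[OF assms neutral_word_conj[OF assms(3) inv_closed[OF ab(1)]]
          neutral_conj_inv_fst[OF assms(3) ab]])
qed

lemma ywords_conj_neutral_snd:
  assumes "\<forall>(a, b) \<in> set abps. a \<in> carrier G \<and> b \<in> carrier G" "(a, b) \<in> set abps"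
    and "neutral_word G Oc ws"
  shows "strong_eq G Oc (P @ map Xg ws @ ywords abps)
    (P @ map Xg (conj_word G ws (inv b)) @ ywords abps)"
proof -
  have ab: "a \<in> carrier G" "b \<in> carrier G"
    using assms(1,2) by auto
  show ?thesis
    by (rule ywords_replace_neutral[OF assms neutral_word_conj[OF assms(3) inv_closed[OF ab(2)]]
          neutral_conj_inv_snd[OF assms(3) ab]])
qed

lemma neutral_heads_conj:
  assumes "c \<in> carrier G"
    and "\<And>ws. neutral_word G Oc ws \<Longrightarrow>
      strong_eq G Oc (P @ map Xg ws @ Y) (P @ map Xg (conj_word G ws c) @ Y)"
  shows "(\<lambda>f. gconj G f c) ` neutral_heads G Oc w P Y \<subseteq> neutral_heads G Oc w P Y"
proof (rule image_subsetI)
  fix f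
  assume "f \<in> neutral_heads G Oc w P Y"
  then obtain zs where zs: "neutral_word G Oc (f # zs)" "strong_eq G Oc w (P @ map Xg (f # zs) @ Y)"
    by (auto simp: neutral_heads_def)
  have "strong_eq G Oc w (P @ map Xg (conj_word G (f # zs) c) @ Y)"
    using zs(2) assms(2)[OF zs(1)] by (rule strong_eq.trans)
  moreover have "neutral_word G Oc (conj_word G (f # zs) c)"
    using zs(1) assms(1) by (rule neutral_word_conj)
  ultimately show "gconj G f c \<in> neutral_heads G Oc w P Y"
    unfolding neutral_heads_def by (intro CollectI exI[of _ "conj_word G zs c"]) simp
qed

lemma neutral_heads_conj_generator:
  fixes w :: "'a gen list"
  assumes "finite Oc" "set gs \<subseteq> Oc" "\<forall>(a, b) \<in> set abps. a \<in> carrier G \<and> b \<in> carrier G"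
    and "k \<in> set gs \<union> fst ` set abps \<union> snd ` set abps"
  defines "A \<equiv> neutral_heads G Oc w (map Xg gs) (ywords abps)"
  shows "(\<lambda>f. gconj G f k) ` A \<subseteq> A"
proof -
  have "A \<subseteq> Oc"
    unfolding A_def by (rule neutral_heads_subset)
  then have A: "finite A" "A \<subseteq> carrier G"
    using assms(1) Oc_subset finite_subset by auto
  consider "k \<in> set gs" | b where "(k, b) \<in> set abps" | a where "(a, k) \<in> set abps"
    using assms(4) by force
  then show ?thesis
  proof cases
    case 1
    then show ?thesis
      using assms(2) unfolding A_def by (intro neutral_heads_conj prefix_conj_neutral) auto
  next
    case 2
    then have "k \<in> carrier G"
      using assms(3) by auto
    moreover have "(\<lambda>f. gconj G f (inv k)) ` A \<subseteq> A"
      using 2 assms(3) \<open>k \<in> carrier G\<close> unfolding A_def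
      by (intro neutral_heads_conj ywords_conj_neutral_fst) auto
    ultimately show ?thesis
      using conj_image_inv[OF A inv_closed] by simp
  next
    case 3
    then have "k \<in> carrier G"
      using assms(3) by auto
    moreover have "(\<lambda>f. gconj G f (inv k)) ` A \<subseteq> A"
      using 3 assms(3) \<open>k \<in> carrier G\<close> unfolding A_def
      by (intro neutral_heads_conj ywords_conj_neutral_snd) auto
    ultimately show ?thesis
      using conj_image_inv[OF A inv_closed] by simp
  qed
qed

end

theorem proposition4:
  fixes G :: "('a, 'b) monoid_scheme" and Oc :: "'a set"
    and gs :: "'a list" and abps :: "('a \<times> 'a) list" and g h :: 'a and ss :: "'a list"
  assumes "equipped G Oc" and "finite Oc"
    and "set gs \<subseteq> Oc"
    and "\<forall>(a, b) \<in> set abps. a \<in> carrier G \<and> b \<in> carrier G"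
    and "g \<in> Oc"
    and "h \<in> generate G (set gs \<union> fst ` set abps \<union> snd ` set abps)"
    and "ss \<noteq> []" and "set ss \<subseteq> Oc" and "alpha G ss = inv\<^bsub>G\<^esub> g"
  shows "\<exists>zs. zs \<noteq> [] \<and> set zs \<subseteq> Oc \<and>
    strong_eq G Oc (map Xg gs @ [Xg g] @ map Xg ss @ ywords abps)
                  (map Xg gs @ [Xg (gconj G g h)] @ map Xg zs @ ywords abps)"
proof -
  interpret conj_invariant_set G Oc
    using assms(1) by (rule equipped_imp_conj_invariant_set)
  define A where "A = neutral_heads G Oc (map Xg gs @ [Xg g] @ map Xg ss @ ywords abps)
    (map Xg gs) (ywords abps)"
  have "A \<subseteq> Oc"
    unfolding A_def by (rule neutral_heads_subset)
  then have A: "finite A" "A \<subseteq> carrier G"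
    using assms(2) Oc_subset finite_subset by auto
  have "g \<in> A"
    using assms(5,8,9) unfolding A_def neutral_heads_def neutral_word_def
    by (auto intro!: exI[of _ ss] strong_eq.refl)
  moreover have "(\<lambda>f. gconj G f h) ` A \<subseteq> A"
  proof (rule conj_image_generate[OF A _ _ assms(6)])
    show "set gs \<union> fst ` set abps \<union> snd ` set abps \<subseteq> carrier G"
      using assms(3,4) Oc_subset by fastforce
    show "(\<lambda>f. gconj G f k) ` A \<subseteq> A" if "k \<in> set gs \<union> fst ` set abps \<union> snd ` set abps" for k
      using assms(2-4) that unfolding A_def by (rule neutral_heads_conj_generator)
  qed
  ultimately obtain zs where zs: "neutral_word G Oc (gconj G g h # zs)"
    "strong_eq G Oc (map Xg gs @ [Xg g] @ map Xg ss @ ywords abps)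
       (map Xg gs @ map Xg (gconj G g h # zs) @ ywords abps)"
    unfolding A_def neutral_heads_def by blast
  moreover have "zs \<noteq> []"
    using zs(1) assms(1) by (auto simp: neutral_word_def equipped_def)
  ultimately show ?thesis
    by (auto simp: neutral_word_def)
qed

end
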